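(* Let $n\ge2$. The sequences $0\to I_n^{0,1}\hookrightarrow\Sigma(B_n)\xrightarrow{\beta^2}\Sigma(B_{n-2})\to0$ and $0\to\mathring{\mathcal{P}}_n\hookrightarrow\mathcal{P}_n\xrightarrow{\pi}\mathcal{P}_{n-2}\to0$ are exact, the maps $\varphi:I_n^{0,1}\to\mathring{\mathcal{P}}_n$, $\varphi:\Sigma(B_n)\to\mathcal{P}_n$ and $\varphi:\Sigma(B_{n-2})\to\mathcal{P}_{n-2}$ are well defined and surjective, and the resulting diagram commutes, i.e. $\pi\circ\varphi=\varphi\circ\beta^2$ on $\Sigma(B_n)$.
   Context: $B_m$: signed permutations $w=w_1\dots w_m$ of $[m]$, values ordered $\cdots<-2<-1<1<2<\cdots$, $w_0=0$, $\mathrm{Des}(w)=\{i\in\{0,\dots,m-1\}: w_i>w_{i+1}\}$; $X_J=\sum_{\mathrm{Des}(w)\subseteq J}w$ for $J\subseteq\{0,\dots,m-1\}$; $\Sigma(B_m)=\mathrm{span}\{X_J\}$ (descent algebra, a subalgebra of $\mathbb{Q}B_m$). $\beta^2:\Sigma(B_n)\to\Sigma(B_{n-2})$ is the linear map with $X_J\mapsto X_{J-2}$ if $0,1\notin J$ and $X_J\mapsto0$ otherwise ($J-2=\{j-2:j\in J\}$). $I_n^{0,1}=\mathrm{span}\{X_J: 0\in J\text{ or }1\in J\}$. $\varphi$ forgets signs: $w\mapsto|w_1|\dots|w_m|$, extended linearly. For $u\in\mathfrak{S}_m$, $\mathrm{Peak}(u)=\{i\in[m-1]: u_{i-1}<u_i>u_{i+1}\}$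 with $u_0=0$ and $\mathring{\mathrm{Peak}}(u)=\mathrm{Peak}(u)\setminus\{1\}$. $\mathcal{F}_m$: subsets of $[m-1]$ with no two consecutive integers; $\mathring{\mathcal{F}}_m=\{F\in\mathcal{F}_m:1\notin F\}$; $P_F=\sum_{\mathrm{Peak}(u)=F}u$, $\mathring{P}_F=\sum_{\mathring{\mathrm{Peak}}(u)=F}u$; $\mathcal{P}_m=\mathrm{span}\{P_F:F\in\mathcal{F}_m\}$, $\mathring{\mathcal{P}}_n=\mathrm{span}\{\mathring{P}_F:F\in\mathring{\mathcal{F}}_n\}$; $\mathcal{P}_0=\mathcal{P}_1=\mathbb{Q}$. $\pi:\mathcal{P}_n\to\mathcal{P}_{n-2}$ is the linear map with $P_F\mapsto P_{F-2}$ if $1,2\notin F$; $P_F\mapsto-P_{(F\setminus\{1\})-2}$ if $1\in F$; $P_F\mapsto0$ if $2\in F$. *)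

theory Defs
  imports Complex_Main
begin

text \<open>Elements of the group algebras QB_m and QS_m are represented as coefficient
functions on words (int lists): an element is a map int list => rat, the
coefficient of the word w.\<close>

type_synonym elt = "int list \<Rightarrow> rat"

definition signed_perms :: "nat \<Rightarrow> int list set" where
  "signed_perms m = {w. length w = m \<and> distinct (map abs w) \<and> set (map abs w) = {1..int m}}"

definition perms :: "nat \<Rightarrow> int list set" where
  "perms m = {u. length u = m \<and> distinct u \<and> set u = {1..int m}}"

text \<open>1-indexed letter with the convention w_0 = 0.\<close>
definition wval :: "int list \<Rightarrow> nat \<Rightarrow> int" where
  "wval w i = (if i = 0 then 0 else w ! (i - 1))"

definition Des :: "int list \<Rightarrow> nat set" where
  "Des w = {i \<in> {0..<length w}. wval w i > wval w (Suc i)}"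

definition X :: "nat \<Rightarrow> nat set \<Rightarrow> elt" where
  "X m J = (\<lambda>w. if w \<in> signed_perms m \<and> Des w \<subseteq> J then 1 else 0)"

definition shift2 :: "nat set \<Rightarrow> nat set" where
  "shift2 J = (\<lambda>j. j - 2) ` J"

definition SigmaB :: "nat \<Rightarrow> elt set" where
  "SigmaB m = {f. \<exists>c. f = (\<lambda>w. \<Sum>J\<in>Pow {0..<m}. c J * X m J w)}"

definition I01 :: "nat \<Rightarrow> elt set" where
  "I01 n = {f. \<exists>c. f = (\<lambda>w. \<Sum>J\<in>{J\<in>Pow {0..<n}. 0 \<in> J \<or> 1 \<in> J}. c J * X n J w)}"

text \<open>beta^2 : the linear map determined by its values on the basis X_J
(coefficients with respect to that basis, which is linearly independent).\<close>
definition beta2 :: "nat \<Rightarrow> elt \<Rightarrow> elt" where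
  "beta2 n f = (let c = (SOME c. f = (\<lambda>w. \<Sum>J\<in>Pow {0..<n}. c J * X n J w)) in
     (\<lambda>v. \<Sum>J\<in>Pow {0..<n}. if 0 \<notin> J \<and> 1 \<notin> J then c J * X (n - 2) (shift2 J) v else 0))"

definition phi :: "elt \<Rightarrow> elt" where
  "phi f = (\<lambda>u. \<Sum>w\<in>{w \<in> signed_perms (length u). map abs w = u}. f w)"

definition Peak :: "int list \<Rightarrow> nat set" where
  "Peak u = {i \<in> {1..<length u}. wval u (i - 1) < wval u i \<and> wval u i > wval u (Suc i)}"

definition PeakO :: "int list \<Rightarrow> nat set" where
  "PeakO u = Peak u - {1}"

definition Fsets :: "nat \<Rightarrow> nat set set" where
  "Fsets m = {F. F \<subseteq> {1..<m} \<and> (\<forall>i\<in>F. Suc i \<notin> F)}"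

definition FsetsO :: "nat \<Rightarrow> nat set set" where
  "FsetsO m = {F \<in> Fsets m. 1 \<notin> F}"

definition P :: "nat \<Rightarrow> nat set \<Rightarrow> elt" where
  "P m F = (\<lambda>u. if u \<in> perms m \<and> Peak u = F then 1 else 0)"

definition PO :: "nat \<Rightarrow> nat set \<Rightarrow> elt" where
  "PO m F = (\<lambda>u. if u \<in> perms m \<and> PeakO u = F then 1 else 0)"

definition PeakAlg :: "nat \<Rightarrow> elt set" where
  "PeakAlg m = {f. \<exists>c. f = (\<lambda>u. \<Sum>F\<in>Fsets m. c F * P m F u)}"

definition PeakAlgO :: "nat \<Rightarrow> elt set" where
  "PeakAlgO m = {f. \<exists>c. f = (\<lambda>u. \<Sum>F\<in>FsetsO m. c F * PO m F u)}"

definition pimap :: "nat \<Rightarrow> elt \<Rightarrow> elt" where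
  "pimap n f = (let c = (SOME c. f = (\<lambda>u. \<Sum>F\<in>Fsets n. c F * P n F u)) in
     (\<lambda>v. \<Sum>F\<in>Fsets n.
        if 1 \<notin> F \<and> 2 \<notin> F then c F * P (n - 2) (shift2 F) v
        else if 1 \<in> F then - (c F * P (n - 2) (shift2 (F - {1})) v)
        else 0))"

end

(*
  Both algebras are spaces of class functions.  If h D is the sum of c J over all J containing D,
  then sum_J c J X_J is the function w |-> h (Des w), and this superset-sum transform is invertible
  on a finite power set; so Sigma(B_m) consists of all functions of the descent set, and likewise
  the peak algebra consists of all functions of the peak set.

  In these coordinates beta^2 maps h to its inclusion-exclusion over the letters 0 and 1, pi maps a
  to G |-> a (G + 2) - a (insert 1 (G + 2)), and phi maps h to
  F |-> 2^|F| * (sum of h J over the J that separate k - 1 from k for every k in F):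
  a permutation with peak set F has 2^|F| signed lifts with descent set J if J separates F and none
  otherwise, since each peak fixes the sign of one letter by two constraints, each valley leaves
  one sign free, and peaks and valleys are equinumerous.  Exactness and pi o phi = phi o beta^2
  become identities between coefficient functions.  Surjectivity of phi inverts a unitriangular
  system: the set whose membership flips exactly at the elements of G separates F iff F is
  contained in G.
*)
theory Submission
  imports Defs
begin

section \<open>Superset sums over a finite power set\<close>

lemma sum_Pow_insert:
  fixes \<psi> :: "'a set \<Rightarrow> 'b::comm_monoid_add"
  assumes "finite A" and "a \<notin> A"
  shows "(\<Sum>J\<in>Pow (insert a A). \<psi> J) = (\<Sum>J\<in>Pow A. \<psi> J + \<psi> (insert a J))"
proof -
  have "inj_on (insert a) (Pow A)" and "Pow A \<inter> insert a ` Pow A = {}"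
    using assms(2) by (auto simp: inj_on_def)
  then show ?thesis
    using assms(1) by (simp add: Pow_insert sum.union_disjoint sum.reindex sum.distrib)
qed

lemma ex_superset_sum_repr:
  fixes g :: "'a set \<Rightarrow> 'b::ab_group_add"
  assumes "finite S"
  shows "\<exists>c. \<forall>D\<subseteq>S. g D = (\<Sum>J\<in>Pow S. if D \<subseteq> J then c J else 0)"
  using assms
proof (induction S arbitrary: g rule: finite_induct)
  case empty
  show ?case by (intro exI[of _ g]) auto
next
  case (insert x S)
  obtain c1 where c1: "\<forall>D\<subseteq>S. g (insert x D) = (\<Sum>J\<in>Pow S. if D \<subseteq> J then c1 J else 0)"
    using insert.IH[of "\<lambda>D. g (insert x D)"] by blast
  obtain c0 where c0: "\<forall>D\<subseteq>S. g D - g (insert x D) = (\<Sum>J\<in>Pow S. if D \<subseteq> J then c0 J else 0)"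
    using insert.IH[of "\<lambda>D. g D - g (insert x D)"] by blast
  define c where "c J = (if x \<in> J then c1 (J - {x}) else c0 J)" for J
  have "g D = (\<Sum>J\<in>Pow (insert x S). if D \<subseteq> J then c J else 0)" if D: "D \<subseteq> insert x S" for D
  proof -
    have c_ins: "c (insert x J) = c1 J" and c_J: "c J = c0 J" if "J \<in> Pow S" for J
    proof -
      have "x \<notin> J" using that insert.hyps(2) by auto
      then show "c (insert x J) = c1 J" and "c J = c0 J" by (simp_all add: c_def)
    qed
    show ?thesis
    proof (cases "x \<in> D")
      case True
      have eq: "(if D \<subseteq> J then c J else 0) + (if D \<subseteq> insert x J then c (insert x J) else 0)
          = (if D - {x} \<subseteq> J then c1 J else 0)" if "J \<in> Pow S" for J
        using True that insert.hyps(2) c_ins[OF that] by auto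
      have "(\<Sum>J\<in>Pow (insert x S). if D \<subseteq> J then c J else 0)
          = (\<Sum>J\<in>Pow S. if D - {x} \<subseteq> J then c1 J else 0)"
        unfolding sum_Pow_insert[OF insert.hyps] by (rule sum.cong[OF refl eq])
      also have "\<dots> = g (insert x (D - {x}))"
      proof -
        have "D - {x} \<subseteq> S" using D by blast
        then show ?thesis by (simp only: c1[rule_format])
      qed
      also have "insert x (D - {x}) = D"
        using True by auto
      finally show ?thesis ..
    next
      case False
      then have "D \<subseteq> S" and "\<And>J. D \<subseteq> insert x J \<longleftrightarrow> D \<subseteq> J"
        using D by auto
      then have "(\<Sum>J\<in>Pow (insert x S). if D \<subseteq> J then c J else 0)
          = (\<Sum>J\<in>Pow S. (if D \<subseteq> J then c0 J else 0) + (if D \<subseteq> J then c1 J else 0))"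
        unfolding sum_Pow_insert[OF insert.hyps] using c_ins c_J by (intro sum.cong) auto
      also have "\<dots> = g D"
        unfolding sum.distrib using c0 c1 \<open>D \<subseteq> S\<close> by (metis diff_add_cancel)
      finally show ?thesis ..
    qed
  qed
  then show ?case by blast
qed

lemma superset_sum_repr_unique:
  fixes c :: "'a set \<Rightarrow> 'b::ab_group_add"
  assumes "finite S" and "\<forall>D\<subseteq>S. (\<Sum>J\<in>Pow S. if D \<subseteq> J then c J else 0) = 0"
  shows "\<forall>J\<in>Pow S. c J = 0"
  using assms
proof (induction S arbitrary: c rule: finite_induct)
  case empty
  then have "(\<Sum>J\<in>Pow {}. if {} \<subseteq> J then c J else 0) = 0"
    by blast
  then show ?case by simp
next
  case (insert x S)
  have c_insert: "\<forall>J\<in>Pow S. c (insert x J) = 0"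
  proof (rule insert.IH[of "\<lambda>J. c (insert x J)"], intro allI impI)
    fix D assume "D \<subseteq> S"
    then have "(\<Sum>J\<in>Pow S. if D \<subseteq> J then c (insert x J) else 0)
        = (\<Sum>J\<in>Pow (insert x S). if insert x D \<subseteq> J then c J else 0)"
      unfolding sum_Pow_insert[OF insert.hyps] using insert.hyps(2) by (intro sum.cong) auto
    also have "\<dots> = 0"
      using insert.prems[rule_format, of "insert x D"] \<open>D \<subseteq> S\<close> by auto
    finally show "(\<Sum>J\<in>Pow S. if D \<subseteq> J then c (insert x J) else 0) = 0" .
  qed
  have "\<forall>J\<in>Pow S. c J = 0"
  proof (rule insert.IH, intro allI impI)
    fix D assume "D \<subseteq> S"
    then have "(\<Sum>J\<in>Pow S. if D \<subseteq> J then c J else 0)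
        = (\<Sum>J\<in>Pow (insert x S). if D \<subseteq> J then c J else 0)"
      unfolding sum_Pow_insert[OF insert.hyps] using c_insert by (intro sum.cong) auto
    also have "\<dots> = 0"
      using insert.prems[rule_format, of D] \<open>D \<subseteq> S\<close> by auto
    finally show "(\<Sum>J\<in>Pow S. if D \<subseteq> J then c J else 0) = 0" .
  qed
  with c_insert show ?case
    by (auto simp: Pow_insert)
qed

section \<open>The descent algebra and the map beta^2\<close>

lemma length_signed_perms: "w \<in> signed_perms m \<Longrightarrow> length w = m"
  unfolding signed_perms_def by simp

lemma Des_subset: "Des w \<subseteq> {0..<length w}"
  unfolding Des_def by auto

definition des_class :: "nat \<Rightarrow> (nat set \<Rightarrow> rat) \<Rightarrow> elt" where
  "des_class n h = (\<lambda>w. if w \<in> signed_perms n then h (Des w) else 0)"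

lemma des_class_cong:
  assumes "\<And>D. D \<subseteq> {0..<n} \<Longrightarrow> h D = h' D"
  shows "des_class n h = des_class n h'"
  unfolding des_class_def by (intro ext if_cong refl assms) (metis Des_subset length_signed_perms)

definition descent_witness :: "nat \<Rightarrow> nat set \<Rightarrow> int list" where
  "descent_witness n J = map (\<lambda>i. if i \<in> J then - (int i + 1) else int i + 1) [0..<n]"

lemma descent_witness_in_signed_perms: "descent_witness n J \<in> signed_perms n"
proof -
  have "map abs (descent_witness n J) = map (\<lambda>i. int i + 1) [0..<n]"
    unfolding descent_witness_def by auto
  moreover have "(\<lambda>i. int i + 1) ` {0..<n} = {1..int n}"
  proof (intro equalityI subsetI)
    fix x assume "x \<in> {1..int n}"
    then show "x \<in> (\<lambda>i. int i + 1) ` {0..<n}"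
      by (intro image_eqI[of _ _ "nat (x - 1)"]) auto
  qed auto
  moreover have "distinct (map (\<lambda>i. int i + 1) [0..<n])"
    by (simp add: distinct_map inj_on_def)
  moreover have "length (descent_witness n J) = n"
    by (simp add: descent_witness_def)
  ultimately show ?thesis
    unfolding signed_perms_def mem_Collect_eq by (metis set_map set_upt)
qed

lemma Des_descent_witness: "Des (descent_witness n J) = J \<inter> {0..<n}"
proof -
  have "i \<in> Des (descent_witness n J) \<longleftrightarrow> i \<in> J" if "i < n" for i
    using that by (cases i) (auto simp: Des_def wval_def descent_witness_def)
  then show ?thesis
    using Des_subset[of "descent_witness n J"] by (auto simp: descent_witness_def)
qed

lemma des_class_eqD:
  assumes "des_class n h = des_class n h'" and "D \<subseteq> {0..<n}"
  shows "h D = h' D"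
  using fun_cong[OF assms(1), of "descent_witness n D"] assms(2)
  by (simp add: des_class_def descent_witness_in_signed_perms Des_descent_witness Int_absorb2)

lemma sum_X_eq_des_class:
  "(\<lambda>w. \<Sum>J\<in>A. c J * X n J w) = des_class n (\<lambda>D. \<Sum>J\<in>A. if D \<subseteq> J then c J else 0)"
proof
  fix w
  show "(\<Sum>J\<in>A. c J * X n J w) = des_class n (\<lambda>D. \<Sum>J\<in>A. if D \<subseteq> J then c J else 0) w"
    by (cases "w \<in> signed_perms n") (auto simp: X_def des_class_def intro: sum.cong)
qed

lemma SigmaB_eq_range_des_class: "SigmaB n = range (des_class n)"
proof (intro set_eqI iffI)
  fix f assume "f \<in> SigmaB n"
  then show "f \<in> range (des_class n)"
    unfolding SigmaB_def sum_X_eq_des_class by blast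
next
  fix f assume "f \<in> range (des_class n)"
  then obtain h where f: "f = des_class n h" by blast
  obtain c where "\<forall>D\<subseteq>{0..<n}. h D = (\<Sum>J\<in>Pow {0..<n}. if D \<subseteq> J then c J else 0)"
    using ex_superset_sum_repr[of "{0..<n}" h] by auto
  then have "f = (\<lambda>w. \<Sum>J\<in>Pow {0..<n}. c J * X n J w)"
    unfolding f sum_X_eq_des_class by (intro des_class_cong) auto
  then show "f \<in> SigmaB n"
    unfolding SigmaB_def by blast
qed

lemma X_coeffs_unique:
  assumes "(\<lambda>w. \<Sum>J\<in>Pow {0..<n}. c J * X n J w) = (\<lambda>w. \<Sum>J\<in>Pow {0..<n}. d J * X n J w)"
  shows "\<forall>J\<in>Pow {0..<n}. c J = d J"
proof -
  have "\<forall>D\<subseteq>{0..<n}. (\<Sum>J\<in>Pow {0..<n}. if D \<subseteq> J then c J - d J else 0) = 0"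
  proof (intro allI impI)
    fix D assume "D \<subseteq> {0..<n}"
    with assms have "(\<Sum>J\<in>Pow {0..<n}. if D \<subseteq> J then c J else 0)
        = (\<Sum>J\<in>Pow {0..<n}. if D \<subseteq> J then d J else 0)"
      unfolding sum_X_eq_des_class by (rule des_class_eqD)
    moreover have "(if D \<subseteq> J then c J - d J else 0)
        = (if D \<subseteq> J then c J else 0) - (if D \<subseteq> J then d J else 0)" for J
      by simp
    ultimately show "(\<Sum>J\<in>Pow {0..<n}. if D \<subseteq> J then c J - d J else 0) = 0"
      by (simp only: sum_subtractf)
  qed
  from superset_sum_repr_unique[OF _ this] show ?thesis by simp
qed

definition unshift2 :: "nat set \<Rightarrow> nat set" where
  "unshift2 K = (\<lambda>i. i + 2) ` K"

lemma shift2_unshift2 [simp]: "shift2 (unshift2 K) = K"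
  unfolding shift2_def unshift2_def by (simp add: image_image)

lemma unshift2_shift2:
  assumes "\<forall>j\<in>J. 2 \<le> j"
  shows "unshift2 (shift2 J) = J"
proof -
  have "(\<lambda>j. j - 2 + 2) ` J = (\<lambda>j. j) ` J"
    using assms by (intro image_cong) auto
  then show ?thesis
    unfolding shift2_def unshift2_def image_image by simp
qed

lemma mem_unshift2: "j \<in> unshift2 K \<longleftrightarrow> 2 \<le> j \<and> j - 2 \<in> K"
  unfolding unshift2_def by force

lemma zero_one_notin_unshift2 [simp]: "0 \<notin> unshift2 K" "1 \<notin> unshift2 K" "Suc 0 \<notin> unshift2 K"
  by (simp_all add: mem_unshift2)

lemma unshift2_subset_iff [simp]: "unshift2 D \<subseteq> unshift2 K \<longleftrightarrow> D \<subseteq> K"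
  unfolding unshift2_def by (rule inj_image_subset_iff) (simp add: inj_on_def)

lemma sum_Pow_split_0_1:
  fixes \<psi> :: "nat set \<Rightarrow> 'b::comm_monoid_add"
  assumes "2 \<le> n"
  shows "(\<Sum>J\<in>Pow {0..<n}. \<psi> J) = (\<Sum>K\<in>Pow {0..<n - 2}. \<psi> (unshift2 K) + \<psi> (insert 1 (unshift2 K))
      + \<psi> (insert 0 (unshift2 K)) + \<psi> (insert 0 (insert 1 (unshift2 K))))"
proof -
  have "{0..<n} = insert 0 (insert 1 {2..<n})"
    using assms by auto
  then have "(\<Sum>J\<in>Pow {0..<n}. \<psi> J) = (\<Sum>J\<in>Pow {2..<n}. \<psi> J + \<psi> (insert 1 J)
      + \<psi> (insert 0 J) + \<psi> (insert 0 (insert 1 J)))"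
    by (simp add: sum_Pow_insert ac_simps)
  also have "\<dots> = (\<Sum>K\<in>Pow {0..<n - 2}. \<psi> (unshift2 K) + \<psi> (insert 1 (unshift2 K))
      + \<psi> (insert 0 (unshift2 K)) + \<psi> (insert 0 (insert 1 (unshift2 K))))"
  proof -
    have "n - 2 + 2 = n"
      using assms by simp
    then have "(\<lambda>i. i + 2) ` {0..<n - 2} = {2..<n}"
      using image_add_atLeastLessThan'[of 2 0 "n - 2"] by (simp only: add_0)
    then have "bij_betw (\<lambda>i. i + 2) {0..<n - 2} {2..<n}"
      unfolding bij_betw_def by (simp add: inj_on_def)
    then have "bij_betw unshift2 (Pow {0..<n - 2}) (Pow {2..<n})"
      unfolding unshift2_def by (rule bij_betw_image_Pow)
    then show ?thesis
      by (rule sum.reindex_bij_betw[symmetric])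
  qed
  finally show ?thesis .
qed

lemma I01_eq:
  "I01 n = {(\<lambda>w. \<Sum>J\<in>Pow {0..<n}. c J * X n J w) | c. \<forall>J. 0 \<notin> J \<and> 1 \<notin> J \<longrightarrow> c J = 0}"
proof -
  have filter: "(\<Sum>J\<in>{J\<in>Pow {0..<n}. 0 \<in> J \<or> 1 \<in> J}. c J * X n J w)
      = (\<Sum>J\<in>Pow {0..<n}. (if 0 \<in> J \<or> 1 \<in> J then c J else 0) * X n J w)" for c w
  proof -
    have "(\<Sum>J\<in>{J\<in>Pow {0..<n}. 0 \<in> J \<or> 1 \<in> J}. c J * X n J w)
        = (\<Sum>J\<in>Pow {0..<n}. if 0 \<in> J \<or> 1 \<in> J then c J * X n J w else 0)"
      by (rule sum.inter_filter) simp
    also have "\<dots> = (\<Sum>J\<in>Pow {0..<n}. (if 0 \<in> J \<or> 1 \<in> J then c J else 0) * X n J w)"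
      by (rule sum.cong) auto
    finally show ?thesis .
  qed
  show ?thesis
  proof (intro set_eqI iffI)
    fix f assume "f \<in> I01 n"
    then obtain c where "f = (\<lambda>w. \<Sum>J\<in>{J\<in>Pow {0..<n}. 0 \<in> J \<or> 1 \<in> J}. c J * X n J w)"
      unfolding I01_def by blast
    then show "f \<in> {(\<lambda>w. \<Sum>J\<in>Pow {0..<n}. c J * X n J w) | c. \<forall>J. 0 \<notin> J \<and> 1 \<notin> J \<longrightarrow> c J = 0}"
      unfolding filter by (intro CollectI exI[of _ "\<lambda>J. if 0 \<in> J \<or> 1 \<in> J then c J else 0"]) auto
  next
    fix f assume "f \<in> {(\<lambda>w. \<Sum>J\<in>Pow {0..<n}. c J * X n J w) | c. \<forall>J. 0 \<notin> J \<and> 1 \<notin> J \<longrightarrow> c J = 0}"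
    then obtain c where f: "f = (\<lambda>w. \<Sum>J\<in>Pow {0..<n}. c J * X n J w)"
      and c: "\<forall>J. 0 \<notin> J \<and> 1 \<notin> J \<longrightarrow> c J = 0"
      by blast
    have "f = (\<lambda>w. \<Sum>J\<in>{J\<in>Pow {0..<n}. 0 \<in> J \<or> 1 \<in> J}. c J * X n J w)"
      unfolding filter f using c by (intro ext sum.cong) auto
    then show "f \<in> I01 n"
      unfolding I01_def by blast
  qed
qed

lemma I01_subset_SigmaB: "I01 n \<subseteq> SigmaB n"
  unfolding I01_eq SigmaB_def by blast

lemma beta2_coords:
  assumes "2 \<le> n"
  shows "beta2 n (\<lambda>w. \<Sum>J\<in>Pow {0..<n}. c J * X n J w)
    = (\<lambda>v. \<Sum>K\<in>Pow {0..<n - 2}. c (unshift2 K) * X (n - 2) K v)"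
proof -
  define c' where "c' = (SOME c'. (\<lambda>w. \<Sum>J\<in>Pow {0..<n}. c J * X n J w)
    = (\<lambda>w. \<Sum>J\<in>Pow {0..<n}. c' J * X n J w))"
  have "(\<lambda>w. \<Sum>J\<in>Pow {0..<n}. c J * X n J w) = (\<lambda>w. \<Sum>J\<in>Pow {0..<n}. c' J * X n J w)"
    unfolding c'_def by (rule someI[of _ c]) (rule refl)
  then have c': "\<forall>J\<in>Pow {0..<n}. c J = c' J"
    by (rule X_coeffs_unique)
  have "beta2 n (\<lambda>w. \<Sum>J\<in>Pow {0..<n}. c J * X n J w) = (\<lambda>v. \<Sum>J\<in>Pow {0..<n}.
      if 0 \<notin> J \<and> 1 \<notin> J then c' J * X (n - 2) (shift2 J) v else 0)"
    unfolding beta2_def Let_def c'_def ..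
  also have "\<dots> = (\<lambda>v. \<Sum>J\<in>Pow {0..<n}. if 0 \<notin> J \<and> 1 \<notin> J then c J * X (n - 2) (shift2 J) v else 0)"
    using c' by (intro ext sum.cong) auto
  also have "\<dots> = (\<lambda>v. \<Sum>K\<in>Pow {0..<n - 2}. c (unshift2 K) * X (n - 2) K v)"
    by (simp add: sum_Pow_split_0_1[OF assms])
  finally show ?thesis .
qed

text \<open>If \<open>h D\<close> is the sum of \<open>c J\<close> over \<open>J \<supseteq> D\<close>, inclusion-exclusion over the letters 0 and 1
  leaves the sum of \<open>c J\<close> over \<open>J \<supseteq> unshift2 K\<close> avoiding 0 and 1: the coefficient function
  of \<open>beta2\<close>.\<close>

definition beta_coeff :: "(nat set \<Rightarrow> rat) \<Rightarrow> nat set \<Rightarrow> rat" where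
  "beta_coeff h K = h (unshift2 K) - h (insert 1 (unshift2 K)) - h (insert 0 (unshift2 K))
    + h (insert 0 (insert 1 (unshift2 K)))"

lemma beta2_des_class:
  assumes n: "2 \<le> n"
  shows "beta2 n (des_class n h) = des_class (n - 2) (beta_coeff h)"
proof -
  obtain c where c: "\<forall>D\<subseteq>{0..<n}. h D = (\<Sum>J\<in>Pow {0..<n}. if D \<subseteq> J then c J else 0)"
    using ex_superset_sum_repr[of "{0..<n}" h] by auto
  have h: "des_class n h = (\<lambda>w. \<Sum>J\<in>Pow {0..<n}. c J * X n J w)"
    unfolding sum_X_eq_des_class using c by (intro des_class_cong) auto
  have "beta2 n (des_class n h)
      = des_class (n - 2) (\<lambda>D. \<Sum>K\<in>Pow {0..<n - 2}. if D \<subseteq> K then c (unshift2 K) else 0)"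
    unfolding h beta2_coords[OF n] by (simp only: sum_X_eq_des_class)
  also have "\<dots> = des_class (n - 2) (beta_coeff h)"
  proof (rule des_class_cong)
    fix D assume "D \<subseteq> {0..<n - 2}"
    then have "insert 0 (insert 1 (unshift2 D)) \<subseteq> {0..<n}"
      using n by (auto simp: mem_unshift2)
    then have "beta_coeff h D = (\<Sum>J\<in>Pow {0..<n}. (if unshift2 D \<subseteq> J then c J else 0)
        - (if insert 1 (unshift2 D) \<subseteq> J then c J else 0) - (if insert 0 (unshift2 D) \<subseteq> J then c J else 0)
        + (if insert 0 (insert 1 (unshift2 D)) \<subseteq> J then c J else 0))"
      unfolding beta_coeff_def using c by (simp add: sum.distrib sum_subtractf)
    also have "\<dots> = (\<Sum>J\<in>Pow {0..<n}. if 0 \<notin> J \<and> 1 \<notin> J \<and> unshift2 D \<subseteq> J then c J else 0)"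
      by (intro sum.cong refl) auto
    also have "\<dots> = (\<Sum>K\<in>Pow {0..<n - 2}. if D \<subseteq> K then c (unshift2 K) else 0)"
      by (simp add: sum_Pow_split_0_1[OF n])
    finally show "(\<Sum>K\<in>Pow {0..<n - 2}. if D \<subseteq> K then c (unshift2 K) else 0) = beta_coeff h D" ..
  qed
  finally show ?thesis .
qed

lemma beta2_image:
  assumes n: "2 \<le> n"
  shows "beta2 n ` SigmaB n = SigmaB (n - 2)"
proof (intro equalityI subsetI)
  fix f assume "f \<in> beta2 n ` SigmaB n"
  then show "f \<in> SigmaB (n - 2)"
    unfolding SigmaB_eq_range_des_class using beta2_des_class[OF n] by auto
next
  fix f assume "f \<in> SigmaB (n - 2)"
  then obtain g where f: "f = des_class (n - 2) g"
    unfolding SigmaB_eq_range_des_class by auto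
  define h where "h J = (if 0 \<in> J \<or> 1 \<in> J then 0 else g (shift2 J))" for J
  have "beta_coeff h = g"
    by (rule ext) (simp add: beta_coeff_def h_def)
  then have "f = beta2 n (des_class n h)"
    unfolding f beta2_des_class[OF n] by simp
  then show "f \<in> beta2 n ` SigmaB n"
    unfolding SigmaB_eq_range_des_class by blast
qed

lemma unshift2_shift2_avoiding_0_1:
  assumes "J \<subseteq> {0..<n}" and "0 \<notin> J" and "1 \<notin> J"
  shows "unshift2 (shift2 J) = J" and "shift2 J \<subseteq> {0..<n - 2}"
proof -
  have ge2: "\<forall>j\<in>J. 2 \<le> j"
    using assms(2,3) by (metis One_nat_def less_2_cases not_le)
  then show "unshift2 (shift2 J) = J"
    by (rule unshift2_shift2)
  show "shift2 J \<subseteq> {0..<n - 2}"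
  proof
    fix i assume "i \<in> shift2 J"
    then obtain j where "j \<in> J" and "i = j - 2"
      unfolding shift2_def by blast
    moreover from this have "j < n" and "2 \<le> j"
      using assms(1) ge2 by auto
    ultimately show "i \<in> {0..<n - 2}"
      by auto
  qed
qed

lemma beta2_kernel:
  assumes n: "2 \<le> n"
  shows "{f \<in> SigmaB n. beta2 n f = (\<lambda>_. 0)} = I01 n"
proof (intro equalityI subsetI)
  fix f assume "f \<in> {f \<in> SigmaB n. beta2 n f = (\<lambda>_. 0)}"
  then obtain c where f: "f = (\<lambda>w. \<Sum>J\<in>Pow {0..<n}. c J * X n J w)"
    and "beta2 n f = (\<lambda>_. 0)"
    unfolding SigmaB_def by blast
  then have "(\<lambda>v. \<Sum>K\<in>Pow {0..<n - 2}. c (unshift2 K) * X (n - 2) K v)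
      = (\<lambda>v. \<Sum>K\<in>Pow {0..<n - 2}. 0 * X (n - 2) K v)"
    by (simp add: beta2_coords[OF n])
  then have c0: "\<forall>K\<in>Pow {0..<n - 2}. c (unshift2 K) = 0"
    using X_coeffs_unique by fastforce
  have "c J = 0" if "J \<in> Pow {0..<n}" and "0 \<notin> J" and "1 \<notin> J" for J
    using c0 unshift2_shift2_avoiding_0_1[of J n] that by (metis PowD PowI)
  then have "f = (\<lambda>w. \<Sum>J\<in>Pow {0..<n}. (if 0 \<notin> J \<and> 1 \<notin> J then 0 else c J) * X n J w)"
    unfolding f by (intro ext sum.cong) auto
  then show "f \<in> I01 n"
    unfolding I01_eq by auto
next
  fix f assume "f \<in> I01 n"
  then obtain c where f: "f = (\<lambda>w. \<Sum>J\<in>Pow {0..<n}. c J * X n J w)"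
    and c: "\<forall>J. 0 \<notin> J \<and> 1 \<notin> J \<longrightarrow> c J = 0"
    unfolding I01_eq by blast
  then have "beta2 n f = (\<lambda>_. 0)"
    by (simp add: beta2_coords[OF n])
  then show "f \<in> {f \<in> SigmaB n. beta2 n f = (\<lambda>_. 0)}"
    using \<open>f \<in> I01 n\<close> I01_subset_SigmaB by blast
qed

section \<open>The peak algebra and the map pi\<close>

lemma length_perms: "u \<in> perms m \<Longrightarrow> length u = m"
  unfolding perms_def by simp

lemma finite_Fsets: "finite (Fsets m)"
  by (rule finite_subset[of _ "Pow {1..<m}"]) (auto simp: Fsets_def)

lemma Peak_in_Fsets: "u \<in> perms m \<Longrightarrow> Peak u \<in> Fsets m"
  unfolding Fsets_def Peak_def by (auto simp: length_perms)

definition peak_class :: "nat \<Rightarrow> (nat set \<Rightarrow> rat) \<Rightarrow> elt" where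
  "peak_class n a = (\<lambda>u. if u \<in> perms n then a (Peak u) else 0)"

lemma peak_class_cong:
  assumes "\<And>F. F \<in> Fsets n \<Longrightarrow> a F = b F"
  shows "peak_class n a = peak_class n b"
  unfolding peak_class_def using assms Peak_in_Fsets by auto

lemma peak_class_zero [simp]: "peak_class n (\<lambda>_. 0) = (\<lambda>_. 0)"
  unfolding peak_class_def by simp

lemma sum_P_eq_peak_class: "(\<lambda>u. \<Sum>F\<in>Fsets n. c F * P n F u) = peak_class n c"
proof
  fix u
  show "(\<Sum>F\<in>Fsets n. c F * P n F u) = peak_class n c u"
    using Peak_in_Fsets[of u n] finite_Fsets
    by (simp add: P_def peak_class_def if_distrib[of "(*) _"] sum.delta' cong: if_cong)
qed

lemma sum_PO_eq_peak_class: "(\<lambda>u. \<Sum>F\<in>FsetsO n. c F * PO n F u) = peak_class n (\<lambda>F. c (F - {1}))"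
proof
  fix u
  have "u \<in> perms n \<Longrightarrow> PeakO u \<in> FsetsO n"
    using Peak_in_Fsets[of u n] by (auto simp: FsetsO_def Fsets_def PeakO_def)
  moreover have "finite (FsetsO n)"
    using finite_Fsets by (simp add: FsetsO_def)
  ultimately show "(\<Sum>F\<in>FsetsO n. c F * PO n F u) = peak_class n (\<lambda>F. c (F - {1})) u"
    by (simp add: PO_def peak_class_def PeakO_def if_distrib[of "(*) _"] sum.delta' cong: if_cong)
qed

lemma PeakAlg_eq_range_peak_class: "PeakAlg n = range (peak_class n)"
  unfolding PeakAlg_def sum_P_eq_peak_class by auto

lemma PeakAlgO_eq_range_peak_class: "PeakAlgO n = range (\<lambda>a. peak_class n (\<lambda>F. a (F - {1})))"
  unfolding PeakAlgO_def sum_PO_eq_peak_class by auto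

lemma PeakAlgO_subset_PeakAlg: "PeakAlgO n \<subseteq> PeakAlg n"
  unfolding PeakAlgO_eq_range_peak_class PeakAlg_eq_range_peak_class by auto

text \<open>As \<open>F\<close> has no two consecutive elements, \<open>peak_swap F\<close> is the product of the disjoint
  transpositions \<open>(p p+1)\<close>, \<open>p \<in> F\<close>, and its one-line notation has peak set \<open>F\<close>.\<close>

definition peak_swap :: "nat set \<Rightarrow> nat \<Rightarrow> nat" where
  "peak_swap F p = (if p \<in> F then p + 1 else if 1 \<le> p \<and> p - 1 \<in> F then p - 1 else p)"

definition peak_witness :: "nat \<Rightarrow> nat set \<Rightarrow> int list" where
  "peak_witness n F = map (\<lambda>i. int (peak_swap F (i + 1))) [0..<n]"

lemma peak_swap_involution:
  assumes "F \<in> Fsets n" and "p \<in> {1..n}"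
  shows "peak_swap F p \<in> {1..n}" and "peak_swap F (peak_swap F p) = p"
  using assms unfolding peak_swap_def Fsets_def by auto

lemma peak_witness_in_perms:
  assumes F: "F \<in> Fsets n"
  shows "peak_witness n F \<in> perms n"
proof -
  have "bij_betw (peak_swap F) {1..n} {1..n}"
    using peak_swap_involution[OF F] by (intro bij_betw_byWitness[where f'="peak_swap F"]) auto
  then have "bij_betw (int \<circ> peak_swap F) {1..n} {1..int n}"
    by (rule bij_betw_trans) (simp add: bij_betw_def image_int_atLeastAtMost)
  moreover have "peak_witness n F = map (int \<circ> peak_swap F) [Suc 0..<Suc n]"
    unfolding peak_witness_def by (simp only: map_Suc_upt[symmetric] map_map) (simp add: comp_def)
  moreover have "set [Suc 0..<Suc n] = {1..n}"
    by auto
  ultimately show ?thesis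
    unfolding perms_def mem_Collect_eq by (simp only: length_map length_upt distinct_map set_map)
      (simp add: bij_betw_def)
qed

lemma mem_Peak_peak_witness:
  assumes p: "p \<in> {1..<n}"
  shows "p \<in> Peak (peak_witness n F) \<longleftrightarrow>
    (p = 1 \<or> peak_swap F (p - 1) < peak_swap F p) \<and> peak_swap F (Suc p) < peak_swap F p"
proof -
  let ?w = "peak_witness n F"
  have val: "wval ?w q = int (peak_swap F q)" if "1 \<le> q" "q \<le> n" for q
    using that unfolding wval_def peak_witness_def by auto
  have "wval ?w (p - 1) = (if p = 1 then 0 else int (peak_swap F (p - 1)))"
  proof (cases "p = 1")
    case False
    then show ?thesis using p by (simp, intro val) auto
  qed (simp add: wval_def)
  moreover have "wval ?w p = int (peak_swap F p)" and "wval ?w (Suc p) = int (peak_swap F (Suc p))"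
    using p by (simp_all add: val)
  moreover have "length ?w = n"
    by (simp add: peak_witness_def)
  ultimately show ?thesis
    using p unfolding Peak_def by auto
qed

lemma Peak_peak_witness:
  assumes F: "F \<in> Fsets n"
  shows "Peak (peak_witness n F) = F"
proof -
  have F_sub: "F \<subseteq> {1..<n}" and F_sep: "\<And>i. i \<in> F \<Longrightarrow> Suc i \<notin> F"
    using F unfolding Fsets_def by auto
  have "p \<in> Peak (peak_witness n F) \<longleftrightarrow> p \<in> F" if p: "p \<in> {1..<n}" for p
  proof -
    consider (peak) "p \<in> F" | (after_peak) "p \<notin> F" "p \<noteq> 1" "p - 1 \<in> F"
      | (other) "p \<notin> F" "p = 1 \<or> p - 1 \<notin> F"
      by blast
    then show ?thesis
    proof cases
      case peak
      then have "peak_swap F p = p + 1" and "peak_swap F (Suc p) = p"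
        and "p = 1 \<or> peak_swap F (p - 1) \<le> p"
        using F_sep[OF peak] F_sub unfolding peak_swap_def by auto
      then show ?thesis
        using peak mem_Peak_peak_witness[OF p] by auto
    next
      case after_peak
      then have "peak_swap F p = p - 1" and "peak_swap F (p - 1) = p"
        using p unfolding peak_swap_def by auto
      then show ?thesis
        using after_peak p mem_Peak_peak_witness[OF p] by auto
    next
      case other
      then have "peak_swap F p = p" and "Suc p \<le> peak_swap F (Suc p)"
        using p F_sub unfolding peak_swap_def by auto
      then show ?thesis
        using other mem_Peak_peak_witness[OF p] by auto
    qed
  qed
  moreover have "Peak (peak_witness n F) \<subseteq> {1..<n}"
    using Peak_in_Fsets[OF peak_witness_in_perms[OF F]] unfolding Fsets_def by auto
  ultimately show ?thesis
    using F_sub by blast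
qed

lemma peak_class_eqD:
  assumes "peak_class n a = peak_class n b" and "F \<in> Fsets n"
  shows "a F = b F"
  using fun_cong[OF assms(1), of "peak_witness n F"] assms(2)
  by (simp add: peak_class_def peak_witness_in_perms Peak_peak_witness)

lemma shift2_eq_iff:
  assumes "\<forall>j\<in>F. 2 \<le> j"
  shows "shift2 F = G \<longleftrightarrow> F = unshift2 G"
  using assms by (metis shift2_unshift2 unshift2_shift2)

lemma unshift2_in_Fsets:
  assumes G: "G \<in> Fsets (n - 2)" and n: "2 \<le> n"
  shows "unshift2 G \<in> Fsets n" and "insert 1 (unshift2 G) \<in> Fsets n"
proof -
  have sub: "G \<subseteq> {1..<n - 2}" and sep: "\<And>i. i \<in> G \<Longrightarrow> Suc i \<notin> G"
    using G by (auto simp: Fsets_def)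
  have "unshift2 G \<subseteq> {3..<n}"
    using sub by (auto simp: unshift2_def subset_iff)
  moreover have "Suc j \<notin> unshift2 G" if "j \<in> unshift2 G" for j
    using that sep by (auto simp: unshift2_def)
  ultimately show "unshift2 G \<in> Fsets n" and "insert 1 (unshift2 G) \<in> Fsets n"
    using n by (auto simp: Fsets_def)
qed

lemma Fsets_containing_1:
  assumes F: "F \<in> Fsets n" and "1 \<in> F"
  shows "\<exists>G\<in>Fsets (n - 2). F = insert 1 (unshift2 G)"
proof (intro bexI)
  have sub: "F \<subseteq> {1..<n}" and sep: "\<And>i. i \<in> F \<Longrightarrow> Suc i \<notin> F"
    using F by (auto simp: Fsets_def)
  have "2 \<notin> F"
    using sep[OF \<open>1 \<in> F\<close>] by (simp add: numeral_2_eq_2)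
  have ge3: "3 \<le> j" if "j \<in> F - {1}" for j
  proof -
    have "1 \<le> j" "j \<noteq> 1" "j \<noteq> 2"
      using that sub \<open>2 \<notin> F\<close> by auto
    then show ?thesis by linarith
  qed
  then show "F = insert 1 (unshift2 (shift2 (F - {1})))"
    using unshift2_shift2[of "F - {1}"] \<open>1 \<in> F\<close> by fastforce
  have "shift2 (F - {1}) \<subseteq> {1..<n - 2}"
  proof
    fix x assume "x \<in> shift2 (F - {1})"
    then obtain j where "j \<in> F - {1}" "x = j - 2"
      unfolding shift2_def by auto
    moreover from this have "3 \<le> j" "j < n"
      using ge3 sub by auto
    ultimately show "x \<in> {1..<n - 2}" by auto
  qed
  moreover have "Suc x \<notin> shift2 (F - {1})" if x: "x \<in> shift2 (F - {1})" for x
  proof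
    assume "Suc x \<in> shift2 (F - {1})"
    then obtain k where "k \<in> F - {1}" "Suc x = k - 2"
      unfolding shift2_def by auto
    moreover obtain j where "j \<in> F - {1}" "x = j - 2"
      using x unfolding shift2_def by auto
    ultimately have "k = Suc j" and "j \<in> F" and "k \<in> F"
      using ge3 by force+
    then show False
      using sep by blast
  qed
  ultimately show "shift2 (F - {1}) \<in> Fsets (n - 2)"
    unfolding Fsets_def by blast
qed

lemma pimap_term_eq:
  fixes x :: rat
  assumes F: "F \<in> Fsets n" and G: "0 \<notin> G"
  shows "(if 1 \<notin> F \<and> 2 \<notin> F then x * (if G = shift2 F then 1 else 0)
      else if 1 \<in> F then - (x * (if G = shift2 (F - {1}) then 1 else 0)) else 0)
    = (if F = unshift2 G then x else 0) - (if F = insert 1 (unshift2 G) then x else 0)"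
proof -
  have "1 \<le> j" if "j \<in> F" for j
    using F that by (auto simp: Fsets_def)
  then have ge2: "\<forall>j\<in>F - {1}. 2 \<le> j"
    by (metis DiffE One_nat_def Suc_1 Suc_leI le_neq_implies_less singletonI)
  have "2 \<notin> unshift2 G"
    using G by (simp add: mem_unshift2)
  then have iff1: "1 \<notin> F \<and> 2 \<notin> F \<and> G = shift2 F \<longleftrightarrow> F = unshift2 G"
    using shift2_eq_iff[of F G] ge2 by auto
  have iff2: "1 \<in> F \<and> G = shift2 (F - {1}) \<longleftrightarrow> F = insert 1 (unshift2 G)"
    using shift2_eq_iff[of "F - {1}" G] ge2 by auto
  consider "1 \<notin> F" "2 \<notin> F" | "1 \<in> F" | "1 \<notin> F" "2 \<in> F"
    by blast
  then show ?thesis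
  proof cases
    case 1
    then show ?thesis
      using iff1 by auto
  next
    case 2
    then show ?thesis
      using iff2 by auto
  next
    case 3
    then have "F \<noteq> unshift2 G" and "F \<noteq> insert 1 (unshift2 G)"
      using iff1 by auto
    with 3 show ?thesis
      by simp
  qed
qed

lemma pimap_coords:
  "pimap n (peak_class n a) = (\<lambda>v. \<Sum>F\<in>Fsets n.
      if 1 \<notin> F \<and> 2 \<notin> F then a F * P (n - 2) (shift2 F) v
      else if 1 \<in> F then - (a F * P (n - 2) (shift2 (F - {1})) v) else 0)"
proof -
  define c where "c = (SOME c. peak_class n a = (\<lambda>u. \<Sum>F\<in>Fsets n. c F * P n F u))"
  have "peak_class n a = (\<lambda>u. \<Sum>F\<in>Fsets n. c F * P n F u)"
    unfolding c_def by (rule someI[of _ a]) (simp add: sum_P_eq_peak_class)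
  then have c: "c F = a F" if "F \<in> Fsets n" for F
    using peak_class_eqD[OF _ that] by (simp add: sum_P_eq_peak_class)
  show ?thesis
    unfolding pimap_def Let_def c_def[symmetric] by (intro ext sum.cong refl) (simp add: c)
qed

lemma pimap_peak_class:
  assumes n: "2 \<le> n"
  shows "pimap n (peak_class n a)
    = peak_class (n - 2) (\<lambda>G. a (unshift2 G) - a (insert 1 (unshift2 G)))"
proof
  fix v
  show "pimap n (peak_class n a) v
      = peak_class (n - 2) (\<lambda>G. a (unshift2 G) - a (insert 1 (unshift2 G))) v"
  proof (cases "v \<in> perms (n - 2)")
    case False
    then have "P (n - 2) H v = 0" for H
      by (simp add: P_def)
    with False show ?thesis
      unfolding pimap_coords by (simp add: peak_class_def sum.neutral)
  next
    case True
    define G where "G = Peak v"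
    have G: "G \<in> Fsets (n - 2)"
      using True Peak_in_Fsets unfolding G_def by blast
    then have "0 \<notin> G"
      by (auto simp: Fsets_def)
    have P_v: "P (n - 2) H v = (if G = H then 1 else 0)" for H
      using True unfolding P_def G_def by simp
    then have "pimap n (peak_class n a) v = (\<Sum>F\<in>Fsets n.
        (if F = unshift2 G then a F else 0) - (if F = insert 1 (unshift2 G) then a F else 0))"
      unfolding pimap_coords P_v using pimap_term_eq[OF _ \<open>0 \<notin> G\<close>] by (intro sum.cong refl) blast
    also have "\<dots> = a (unshift2 G) - a (insert 1 (unshift2 G))"
      using unshift2_in_Fsets[OF G n] finite_Fsets by (simp add: sum_subtractf sum.delta')
    finally show ?thesis
      using True by (simp add: peak_class_def G_def)
  qed
qed

lemma pimap_image:
  assumes n: "2 \<le> n"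
  shows "pimap n ` PeakAlg n = PeakAlg (n - 2)"
proof (intro equalityI subsetI)
  fix f assume "f \<in> pimap n ` PeakAlg n"
  then show "f \<in> PeakAlg (n - 2)"
    unfolding PeakAlg_eq_range_peak_class using pimap_peak_class[OF n] by auto
next
  fix f assume "f \<in> PeakAlg (n - 2)"
  then obtain b where f: "f = peak_class (n - 2) b"
    unfolding PeakAlg_eq_range_peak_class by auto
  have "f = pimap n (peak_class n (\<lambda>F. if 1 \<in> F then 0 else b (shift2 F)))"
    unfolding f pimap_peak_class[OF n] by simp
  then show "f \<in> pimap n ` PeakAlg n"
    unfolding PeakAlg_eq_range_peak_class by blast
qed

lemma pimap_kernel:
  assumes n: "2 \<le> n"
  shows "{f \<in> PeakAlg n. pimap n f = (\<lambda>_. 0)} = PeakAlgO n"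
proof (intro equalityI subsetI)
  fix f assume "f \<in> {f \<in> PeakAlg n. pimap n f = (\<lambda>_. 0)}"
  then obtain a where f: "f = peak_class n a" and "pimap n f = peak_class (n - 2) (\<lambda>_. 0)"
    unfolding PeakAlg_eq_range_peak_class by auto
  then have eq0: "peak_class (n - 2) (\<lambda>G. a (unshift2 G) - a (insert 1 (unshift2 G)))
      = peak_class (n - 2) (\<lambda>_. 0)"
    by (simp add: pimap_peak_class[OF n])
  have a: "a (unshift2 G) = a (insert 1 (unshift2 G))" if "G \<in> Fsets (n - 2)" for G
    using peak_class_eqD[OF eq0 that] by simp
  have "a F = a (F - {1})" if F_in: "F \<in> Fsets n" for F
  proof (cases "1 \<in> F")
    case True
    then obtain G where "G \<in> Fsets (n - 2)" and F: "F = insert 1 (unshift2 G)"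
      using Fsets_containing_1[OF F_in True] by blast
    then show ?thesis
      using a by (simp add: F)
  qed simp
  then have "f = peak_class n (\<lambda>F. a (F - {1}))"
    unfolding f by (rule peak_class_cong)
  then show "f \<in> PeakAlgO n"
    unfolding PeakAlgO_eq_range_peak_class by blast
next
  fix f assume "f \<in> PeakAlgO n"
  then obtain b where "f = peak_class n (\<lambda>F. b (F - {1}))"
    unfolding PeakAlgO_eq_range_peak_class by blast
  then have "pimap n f = (\<lambda>_. 0)"
    by (simp add: pimap_peak_class[OF n])
  then show "f \<in> {f \<in> PeakAlg n. pimap n f = (\<lambda>_. 0)}"
    using \<open>f \<in> PeakAlgO n\<close> PeakAlgO_subset_PeakAlg by blast
qed

section \<open>Signed lifts and the map phi\<close>

definition lifts :: "int list \<Rightarrow> int list set" where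
  "lifts u = {w \<in> signed_perms (length u). map abs w = u}"

lemma finite_signed_perms: "finite (signed_perms m)"
proof (rule finite_subset)
  show "signed_perms m \<subseteq> {w. set w \<subseteq> {- int m..int m} \<and> length w = m}"
  proof (rule subsetI, unfold mem_Collect_eq, intro conjI)
    fix w assume w: "w \<in> signed_perms m"
    show "set w \<subseteq> {- int m..int m}"
    proof
      fix x assume "x \<in> set w"
      then have "\<bar>x\<bar> \<in> {1..int m}"
        using w unfolding signed_perms_def by (metis (mono_tags) image_eqI list.set_map mem_Collect_eq)
      then show "x \<in> {- int m..int m}"
        by auto
    qed
    show "length w = m"
      using w by (rule length_signed_perms)
  qed
  show "finite {w. set w \<subseteq> {- int m..int m} \<and> length w = m}"
    by (rule finite_lists_length_eq) simp
qed

lemma finite_lifts: "finite (lifts u)"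
  unfolding lifts_def using finite_signed_perms by simp

lemma perms_nth_pos:
  assumes "u \<in> perms n" and "i < n"
  shows "0 < u ! i"
proof -
  have "u ! i \<in> set u"
    using assms by (simp add: length_perms)
  then show ?thesis
    using assms(1) unfolding perms_def by auto
qed

lemma map_abs_in_perms: "w \<in> signed_perms n \<Longrightarrow> map abs w \<in> perms n"
  unfolding signed_perms_def perms_def by auto

lemma mem_lifts_iff:
  assumes u: "u \<in> perms n"
  shows "w \<in> lifts u \<longleftrightarrow> length w = n \<and> (\<forall>i<n. w ! i = u ! i \<or> w ! i = - (u ! i))"
proof
  assume "w \<in> lifts u"
  then have "length w = n" and "map abs w = u"
    using length_perms[OF u] unfolding lifts_def signed_perms_def by auto
  moreover have "w ! i = u ! i \<or> w ! i = - (u ! i)" if "i < n" for i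
  proof -
    have "u ! i = \<bar>w ! i\<bar>"
      using \<open>map abs w = u\<close> \<open>length w = n\<close> that by auto
    then show ?thesis
      by (cases "0 \<le> w ! i") auto
  qed
  ultimately show "length w = n \<and> (\<forall>i<n. w ! i = u ! i \<or> w ! i = - (u ! i))"
    by blast
next
  assume w: "length w = n \<and> (\<forall>i<n. w ! i = u ! i \<or> w ! i = - (u ! i))"
  have "\<bar>w ! i\<bar> = u ! i" if "i < n" for i
    using w perms_nth_pos[OF u that] that by (cases "w ! i = u ! i") auto
  then have "map abs w = u"
    using w length_perms[OF u] by (intro nth_equalityI) auto
  moreover have "w \<in> signed_perms n"
    unfolding signed_perms_def mem_Collect_eq \<open>map abs w = u\<close> using u w unfolding perms_def by blast
  ultimately show "w \<in> lifts u"
    unfolding lifts_def using length_perms[OF u] by simp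
qed

lemma zero_notin_Des_perms: "u \<in> perms n \<Longrightarrow> 0 \<notin> Des u"
  using perms_nth_pos[of u n 0] length_perms[of u n] by (auto simp: Des_def wval_def)

text \<open>Whether a lift descends at \<open>j\<close> is decided by the sign of the letter of larger absolute value.\<close>

lemma Des_lift_iff:
  assumes u: "u \<in> perms n" and w: "w \<in> lifts u" and j: "j < n"
  shows "j \<in> Des w \<longleftrightarrow> (if j \<in> Des u then 0 < w ! (j - 1) else w ! j < 0)"
proof (cases j)
  case 0
  then show ?thesis
    using zero_notin_Des_perms[OF u] j w mem_lifts_iff[OF u] by (auto simp: Des_def wval_def)
next
  case (Suc i)
  have "0 < u ! i" and "0 < u ! Suc i"
    using perms_nth_pos[OF u] Suc j by auto
  moreover have "u ! i \<noteq> u ! Suc i"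
    using u Suc j by (auto simp: perms_def nth_eq_iff_index_eq)
  moreover have "w ! i = u ! i \<or> w ! i = - (u ! i)" and "w ! Suc i = u ! Suc i \<or> w ! Suc i = - (u ! Suc i)"
    using w mem_lifts_iff[OF u] Suc j by auto
  moreover have "length w = n" and "length u = n"
    using w mem_lifts_iff[OF u] length_perms[OF u] by auto
  ultimately show ?thesis
    using Suc j unfolding Des_def wval_def by auto
qed

text \<open>The sign of \<open>w ! i\<close> (the paper's letter \<open>w\<close> number \<open>i + 1\<close>) is constrained by descent
  position \<open>i\<close> when \<open>u\<close> ascends there and by position \<open>i + 1\<close> when \<open>u\<close> descends there.\<close>

definition sign_compatible :: "int list \<Rightarrow> nat set \<Rightarrow> nat \<Rightarrow> int \<Rightarrow> bool" where
  "sign_compatible u J i x \<longleftrightarrow>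
     (i \<notin> Des u \<longrightarrow> (i \<in> J \<longleftrightarrow> x < 0)) \<and> (Suc i \<in> Des u \<longrightarrow> (Suc i \<in> J \<longleftrightarrow> 0 < x))"

lemma Des_lift_eq_iff:
  assumes u: "u \<in> perms n" and w: "w \<in> lifts u" and J: "J \<subseteq> {0..<n}"
  shows "Des w = J \<longleftrightarrow> (\<forall>i<n. sign_compatible u J i (w ! i))"
proof -
  have "length w = n"
    using w mem_lifts_iff[OF u] by blast
  then have "Des w \<subseteq> {0..<n}" and Des_u: "Des u \<subseteq> {0..<n}"
    using Des_subset[of w] Des_subset[of u] length_perms[OF u] by auto
  then have "Des w = J \<longleftrightarrow> (\<forall>j<n. j \<in> Des w \<longleftrightarrow> j \<in> J)"
    using J by auto
  also have "\<dots> \<longleftrightarrow> (\<forall>i<n. sign_compatible u J i (w ! i))"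
  proof
    assume A: "\<forall>j<n. j \<in> Des w \<longleftrightarrow> j \<in> J"
    show "\<forall>i<n. sign_compatible u J i (w ! i)"
      unfolding sign_compatible_def
      using A Des_lift_iff[OF u w] Des_u by (metis atLeastLessThan_iff diff_Suc_1 less_or_eq_imp_le subsetD)
  next
    assume B: "\<forall>i<n. sign_compatible u J i (w ! i)"
    show "\<forall>j<n. j \<in> Des w \<longleftrightarrow> j \<in> J"
    proof (intro allI impI)
      fix j assume j: "j < n"
      show "j \<in> Des w \<longleftrightarrow> j \<in> J"
      proof (cases "j \<in> Des u")
        case False
        then show ?thesis
          using B j Des_lift_iff[OF u w j] unfolding sign_compatible_def by auto
      next
        case True
        then obtain i where "j = Suc i"
          using zero_notin_Des_perms[OF u] by (cases j) auto
        then show ?thesis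
          using B True j Des_lift_iff[OF u w j] unfolding sign_compatible_def by auto
      qed
    qed
  qed
  finally show ?thesis .
qed

lemma card_lists_nth:
  assumes "\<And>i. i < n \<Longrightarrow> finite (A i)"
  shows "card {w. length w = n \<and> (\<forall>i<n. w ! i \<in> A i)} = (\<Prod>i<n. card (A i))"
  using assms
proof (induction n)
  case 0
  have "{w. length w = 0 \<and> (\<forall>i<0. w ! i \<in> A i)} = {[]}"
    by auto
  then show ?case by simp
next
  case (Suc n)
  let ?S = "\<lambda>n. {w. length w = n \<and> (\<forall>i<n. w ! i \<in> A i)}"
  have "?S (Suc n) = (\<lambda>(xs, x). xs @ [x]) ` (?S n \<times> A n)"
  proof (intro equalityI subsetI)
    fix w assume w: "w \<in> ?S (Suc n)"
    then have "w = take n w @ [w ! n]"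
      by (simp add: take_Suc_conv_app_nth[symmetric])
    moreover have "(take n w, w ! n) \<in> ?S n \<times> A n"
      using w by auto
    ultimately show "w \<in> (\<lambda>(xs, x). xs @ [x]) ` (?S n \<times> A n)"
      by (metis (no_types, lifting) case_prod_conv image_eqI)
  next
    fix w assume "w \<in> (\<lambda>(xs, x). xs @ [x]) ` (?S n \<times> A n)"
    then obtain xs x where "w = xs @ [x]" and "xs \<in> ?S n" and "x \<in> A n"
      by auto
    then show "w \<in> ?S (Suc n)"
      by (auto simp: nth_append less_Suc_eq)
  qed
  moreover have "inj_on (\<lambda>(xs, x). xs @ [x]) (?S n \<times> A n)"
    by (rule inj_onI) auto
  ultimately have "card (?S (Suc n)) = card (?S n) * card (A n)"
    by (simp add: card_image card_cartesian_product)
  then show ?case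
    using Suc by simp
qed

lemma card_plus_minus:
  fixes p :: int
  assumes "p \<noteq> 0"
  shows "card {x. (x = p \<or> x = - p) \<and> Q x} = (if Q p then 1 else 0) + (if Q (- p) then 1 else 0)"
proof -
  have "{x. (x = p \<or> x = - p) \<and> Q x} = (if Q p then {p} else {}) \<union> (if Q (- p) then {- p} else {})"
    by auto
  then show ?thesis
    using assms by simp
qed

lemma card_compatible_signs:
  assumes u: "u \<in> perms n" and i: "i < n"
  shows "card {x. (x = u ! i \<or> x = - (u ! i)) \<and> sign_compatible u J i x}
    = (if i \<notin> Des u \<and> Suc i \<in> Des u then (if (i \<in> J) \<noteq> (Suc i \<in> J) then 1 else 0)
       else if i \<in> Des u \<and> Suc i \<notin> Des u then 2 else 1)"
proof -
  have "0 < u ! i"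
    by (rule perms_nth_pos[OF u i])
  moreover from this have "u ! i \<noteq> 0"
    by simp
  ultimately show ?thesis
    unfolding card_plus_minus[OF \<open>u ! i \<noteq> 0\<close>] sign_compatible_def
    by (cases "i \<in> Des u"; cases "Suc i \<in> Des u"; cases "i \<in> J"; cases "Suc i \<in> J") simp_all
qed

lemma prod_peaks_valleys:
  fixes n :: nat
  assumes "\<And>i. \<not> (Pk i \<and> V i)"
  shows "(\<Prod>i<n. if Pk i then (if S i then 1 else 0) else if V i then 2 else 1 :: nat)
    = (if \<forall>i<n. Pk i \<longrightarrow> S i then 2 ^ card {i. i < n \<and> V i} else 0)"
proof (induction n)
  case 0
  then show ?case by simp
next
  case (Suc n)
  have "card {i. i < Suc n \<and> V i} = card {i. i < n \<and> V i} + (if V n then 1 else 0)"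
  proof -
    have "{i. i < Suc n \<and> V i} = {i. i < n \<and> V i} \<union> (if V n then {n} else {})"
      by (auto simp: less_Suc_eq)
    then show ?thesis by simp
  qed
  moreover have "(\<forall>i<Suc n. Pk i \<longrightarrow> S i) \<longleftrightarrow> (\<forall>i<n. Pk i \<longrightarrow> S i) \<and> (Pk n \<longrightarrow> S n)"
    by (auto simp: less_Suc_eq)
  ultimately show ?case
    unfolding prod.lessThan_Suc Suc.IH using assms[of n]
    by (cases "Pk n"; cases "V n"; cases "S n"; cases "\<forall>i<n. Pk i \<longrightarrow> S i") (simp_all add: power_add)
qed

lemma card_enter_eq_card_leave:
  assumes "0 \<notin> D" and "n \<notin> D"
  shows "card {i. i < n \<and> i \<notin> D \<and> Suc i \<in> D} = card {i. i < n \<and> i \<in> D \<and> Suc i \<notin> D}"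
proof -
  have "(\<Sum>i<n. of_bool (Suc i \<in> D) - of_bool (i \<in> D) :: int) = 0"
    using sum_lessThan_telescope[of "\<lambda>i. of_bool (i \<in> D) :: int" n] assms by simp
  moreover have "of_bool (Suc i \<in> D) - of_bool (i \<in> D)
      = of_bool (i \<notin> D \<and> Suc i \<in> D) - (of_bool (i \<in> D \<and> Suc i \<notin> D) :: int)" for i
    by auto
  ultimately have "(\<Sum>i<n. of_bool (i \<notin> D \<and> Suc i \<in> D) :: int)
      = (\<Sum>i<n. of_bool (i \<in> D \<and> Suc i \<notin> D))"
    by (simp add: sum_subtractf)
  then show ?thesis
    by (simp add: Int_def conj_commute)
qed

lemma Peak_eq_ascent_descent:
  assumes u: "u \<in> perms n"
  shows "Peak u = Suc ` {i. i < n \<and> i \<notin> Des u \<and> Suc i \<in> Des u}"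
proof -
  have len: "length u = n"
    by (rule length_perms[OF u])
  have neq: "wval u i \<noteq> wval u (Suc i)" if "i < n" for i
  proof (cases i)
    case 0
    then show ?thesis
      using perms_nth_pos[OF u that] by (simp add: wval_def)
  next
    case (Suc k)
    then show ?thesis
      using u that len by (auto simp: wval_def perms_def nth_eq_iff_index_eq)
  qed
  have "Suc i \<in> Peak u \<longleftrightarrow> i < n \<and> i \<notin> Des u \<and> Suc i \<in> Des u" for i
    using neq[of i] unfolding Peak_def Des_def len by auto
  moreover have "0 \<notin> Peak u"
    unfolding Peak_def by auto
  ultimately show ?thesis
    by (auto simp: image_iff) (metis not0_implies_Suc)
qed

definition separates :: "nat set \<Rightarrow> nat set \<Rightarrow> bool" where
  "separates J F \<longleftrightarrow> (\<forall>k\<in>F. (k - 1 \<in> J) \<noteq> (k \<in> J))"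

lemma card_lifts_Des:
  assumes u: "u \<in> perms n" and J: "J \<subseteq> {0..<n}"
  shows "card {w \<in> lifts u. Des w = J} = (if separates J (Peak u) then 2 ^ card (Peak u) else 0)"
proof -
  define A where "A i = {x. (x = u ! i \<or> x = - (u ! i)) \<and> sign_compatible u J i x}" for i
  define pk where "pk i \<longleftrightarrow> i \<notin> Des u \<and> Suc i \<in> Des u" for i
  define vl where "vl i \<longleftrightarrow> i \<in> Des u \<and> Suc i \<notin> Des u" for i
  have "{w \<in> lifts u. Des w = J} = {w. length w = n \<and> (\<forall>i<n. w ! i \<in> A i)}"
    using Des_lift_eq_iff[OF u _ J] mem_lifts_iff[OF u] unfolding A_def by auto
  moreover have "finite (A i)" for i
    unfolding A_def by (rule finite_subset[of _ "{u ! i, - (u ! i)}"]) auto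
  ultimately have "card {w \<in> lifts u. Des w = J} = (\<Prod>i<n. card (A i))"
    by (simp add: card_lists_nth)
  also have "\<dots> = (\<Prod>i<n. if pk i then (if (i \<in> J) \<noteq> (Suc i \<in> J) then 1 else 0)
      else if vl i then 2 else 1)"
    unfolding A_def pk_def vl_def by (intro prod.cong refl) (simp add: card_compatible_signs[OF u])
  also have "\<dots> = (if \<forall>i<n. pk i \<longrightarrow> (i \<in> J) \<noteq> (Suc i \<in> J) then 2 ^ card {i. i < n \<and> vl i} else 0)"
    by (rule prod_peaks_valleys) (auto simp: pk_def vl_def)
  also have "(\<forall>i<n. pk i \<longrightarrow> (i \<in> J) \<noteq> (Suc i \<in> J)) \<longleftrightarrow> separates J (Peak u)"
    unfolding separates_def Peak_eq_ascent_descent[OF u] pk_def by auto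
  also have "card {i. i < n \<and> vl i} = card (Peak u)"
  proof -
    have "n \<notin> Des u"
      using Des_subset[of u] length_perms[OF u] by auto
    then have "card {i. i < n \<and> pk i} = card {i. i < n \<and> vl i}"
      unfolding pk_def vl_def by (intro card_enter_eq_card_leave zero_notin_Des_perms[OF u])
    then show ?thesis
      unfolding Peak_eq_ascent_descent[OF u] pk_def by (simp add: card_image)
  qed
  finally show ?thesis .
qed

definition phi_coeff :: "nat \<Rightarrow> (nat set \<Rightarrow> rat) \<Rightarrow> nat set \<Rightarrow> rat" where
  "phi_coeff n h F = 2 ^ card F * (\<Sum>J\<in>Pow {0..<n}. if separates J F then h J else 0)"

lemma phi_des_class: "phi (des_class n h) = peak_class n (phi_coeff n h)"
proof
  fix u
  show "phi (des_class n h) u = peak_class n (phi_coeff n h) u"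
  proof (cases "u \<in> perms n")
    case True
    have "Des w \<in> Pow {0..<n}" if "w \<in> lifts u" for w
      using that Des_subset[of w] mem_lifts_iff[OF True] by auto
    have "phi (des_class n h) u = (\<Sum>w\<in>lifts u. h (Des w))"
      unfolding phi_def lifts_def[symmetric]
      by (rule sum.cong[OF refl]) (simp add: des_class_def lifts_def length_perms[OF True])
    also have "\<dots> = (\<Sum>J\<in>Pow {0..<n}. \<Sum>w\<in>{w \<in> lifts u. Des w = J}. h (Des w))"
      by (rule sum.group[symmetric]) (use finite_lifts \<open>\<And>w. w \<in> lifts u \<Longrightarrow> Des w \<in> Pow {0..<n}\<close> in auto)
    also have "\<dots> = (\<Sum>J\<in>Pow {0..<n}. h J * of_nat (card {w \<in> lifts u. Des w = J}))"
      by (simp add: mult.commute)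
    also have "\<dots> = (\<Sum>J\<in>Pow {0..<n}. h J * (if separates J (Peak u) then 2 ^ card (Peak u) else 0))"
      by (intro sum.cong refl) (simp add: card_lifts_Des[OF True])
    also have "\<dots> = phi_coeff n h (Peak u)"
      unfolding phi_coeff_def by (simp add: sum_distrib_left if_distrib mult.commute cong: if_cong)
    finally show ?thesis
      using True by (simp add: peak_class_def)
  next
    case False
    then have "w \<notin> signed_perms n" if "w \<in> lifts u" for w
      using that map_abs_in_perms unfolding lifts_def by blast
    with False show ?thesis
      by (simp add: phi_def lifts_def[symmetric] des_class_def peak_class_def sum.neutral)
  qed
qed

section \<open>Surjectivity of phi\<close>

definition parity_set :: "nat \<Rightarrow> nat set \<Rightarrow> nat set" where
  "parity_set m G = {j \<in> {0..<m}. odd (card (G \<inter> {1..j}))}"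

lemma parity_set_subset: "parity_set m G \<subseteq> {1..<m}"
proof
  fix j assume j: "j \<in> parity_set m G"
  have "j \<noteq> 0"
  proof
    assume "j = 0"
    then have "G \<inter> {1..j} = {}" by auto
    with j show False
      unfolding parity_set_def by simp
  qed
  with j show "j \<in> {1..<m}"
    unfolding parity_set_def by auto
qed

lemma separates_parity_set_iff:
  assumes "finite G" and "F \<subseteq> {1..<m}"
  shows "separates (parity_set m G) F \<longleftrightarrow> F \<subseteq> G"
proof -
  have "(k - 1 \<in> parity_set m G) \<noteq> (k \<in> parity_set m G) \<longleftrightarrow> k \<in> G" if "k \<in> F" for k
  proof -
    have k: "1 \<le> k" "k < m"
      using that assms(2) by auto
    then have "{1..k} = insert k {1..k - 1}"
      by auto
    then have "G \<inter> {1..k} = (if k \<in> G then insert k (G \<inter> {1..k - 1}) else G \<inter> {1..k - 1})"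
      by (simp only: Int_insert_right)
    then have "card (G \<inter> {1..k}) = card (G \<inter> {1..k - 1}) + (if k \<in> G then 1 else 0)"
      using assms(1) k by simp
    then show ?thesis
      using k unfolding parity_set_def by auto
  qed
  then show ?thesis
    unfolding separates_def by auto
qed

lemma ex_separating_sum_repr:
  fixes g :: "nat set \<Rightarrow> 'b::ab_group_add"
  assumes A: "finite A" "{1..<n} \<subseteq> A"
  shows "\<exists>h. \<forall>F\<subseteq>{1..<n}. (\<Sum>J\<in>Pow A. if separates J F then h J else 0) = g F"
proof -
  obtain c where c: "\<forall>F\<subseteq>{1..<n}. g F = (\<Sum>G\<in>Pow {1..<n}. if F \<subseteq> G then c G else 0)"
    using ex_superset_sum_repr[of "{1..<n}" g] by auto
  \<comment> \<open>\<open>parity_set n G\<close> separates \<open>F\<close> iff \<open>F \<subseteq> G\<close>, so this inverts the superset sums\<close>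
  define h where "h J = (\<Sum>G\<in>Pow {1..<n}. if J = parity_set n G then c G else 0)" for J
  have "(\<Sum>J\<in>Pow A. if separates J F then h J else 0) = g F" if F: "F \<subseteq> {1..<n}" for F
  proof -
    have "(\<Sum>J\<in>Pow A. if separates J F then h J else 0)
        = (\<Sum>J\<in>Pow A. \<Sum>G\<in>Pow {1..<n}. if separates J F \<and> J = parity_set n G then c G else 0)"
      unfolding h_def by (intro sum.cong refl) (auto intro: sum.cong)
    also have "\<dots> = (\<Sum>G\<in>Pow {1..<n}. \<Sum>J\<in>Pow A. if separates J F \<and> J = parity_set n G then c G else 0)"
      by (rule sum.swap)
    also have "\<dots> = (\<Sum>G\<in>Pow {1..<n}. if separates (parity_set n G) F then c G else 0)"
    proof (intro sum.cong refl)
      fix G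
      have "parity_set n G \<in> Pow A"
        using parity_set_subset A(2) by blast
      moreover have "(if separates J F \<and> J = parity_set n G then c G else 0)
          = (if J = parity_set n G then if separates (parity_set n G) F then c G else 0 else 0)" for J
        by auto
      ultimately show "(\<Sum>J\<in>Pow A. if separates J F \<and> J = parity_set n G then c G else 0)
          = (if separates (parity_set n G) F then c G else 0)"
        using A(1) by (simp add: sum.delta)
    qed
    also have "\<dots> = (\<Sum>G\<in>Pow {1..<n}. if F \<subseteq> G then c G else 0)"
      using F by (intro sum.cong refl) (simp add: separates_parity_set_iff finite_subset)
    also have "\<dots> = g F"
      using c F by simp
    finally show ?thesis .
  qed
  then show ?thesis by blast
qed

lemma phi_image_SigmaB: "phi ` SigmaB n = PeakAlg n"
proof (intro equalityI subsetI)
  fix f assume "f \<in> phi ` SigmaB n"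
  then show "f \<in> PeakAlg n"
    unfolding SigmaB_eq_range_des_class PeakAlg_eq_range_peak_class by (auto simp: phi_des_class)
next
  fix f assume "f \<in> PeakAlg n"
  then obtain a where f: "f = peak_class n a"
    unfolding PeakAlg_eq_range_peak_class by blast
  obtain h where h: "\<forall>F\<subseteq>{1..<n}. (\<Sum>J\<in>Pow {0..<n}. if separates J F then h J else 0) = a F / 2 ^ card F"
    using ex_separating_sum_repr[of "{0..<n}" n "\<lambda>F. a F / 2 ^ card F"] by auto
  have "phi_coeff n h F = a F" if "F \<in> Fsets n" for F
    using that h by (simp add: phi_coeff_def Fsets_def)
  then have "f = phi (des_class n h)"
    unfolding f phi_des_class by (intro peak_class_cong) simp
  then show "f \<in> phi ` SigmaB n"
    unfolding SigmaB_eq_range_des_class by blast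
qed

lemma des_class_drop_0_in_I01:
  assumes n: "1 \<le> n"
  shows "des_class n (\<lambda>D. k (D - {0})) \<in> I01 n"
proof -
  obtain c where c: "\<forall>D\<subseteq>{1..<n}. k D = (\<Sum>J\<in>Pow {1..<n}. if D \<subseteq> J then c J else 0)"
    using ex_superset_sum_repr[of "{1..<n}" k] by auto
  define c' where "c' J = (if 0 \<in> J then c (J - {0}) else 0)" for J
  have "k (D - {0}) = (\<Sum>J\<in>Pow {0..<n}. if D \<subseteq> J then c' J else 0)" if D: "D \<subseteq> {0..<n}" for D
  proof -
    have split: "{0..<n} = insert 0 {1..<n}" and "0 \<notin> {1..<n}"
      using n by auto
    have eq: "(if D \<subseteq> J then c' J else 0) + (if D \<subseteq> insert 0 J then c' (insert 0 J) else 0)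
        = (if D - {0} \<subseteq> J then c J else 0)" if "J \<in> Pow {1..<n}" for J
      using that by (auto simp: c'_def)
    have "(\<Sum>J\<in>Pow {0..<n}. if D \<subseteq> J then c' J else 0)
        = (\<Sum>J\<in>Pow {1..<n}. if D - {0} \<subseteq> J then c J else 0)"
      unfolding split sum_Pow_insert[OF finite_atLeastLessThan \<open>0 \<notin> {1..<n}\<close>]
      by (rule sum.cong[OF refl eq])
    also have "\<dots> = k (D - {0})"
    proof -
      have "D - {0} \<subseteq> {1..<n}"
        using D by auto
      then show ?thesis
        by (simp only: c[rule_format])
    qed
    finally show ?thesis ..
  qed
  then have "des_class n (\<lambda>D. k (D - {0})) = (\<lambda>w. \<Sum>J\<in>Pow {0..<n}. c' J * X n J w)"
    unfolding sum_X_eq_des_class by (rule des_class_cong)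
  moreover have "\<forall>J. 0 \<notin> J \<and> 1 \<notin> J \<longrightarrow> c' J = 0"
    by (simp add: c'_def)
  ultimately show ?thesis
    unfolding I01_eq by blast
qed

lemma separates_insert_0:
  assumes J: "0 \<notin> J" and F: "0 \<notin> F"
  shows "separates J F \<longleftrightarrow> (1 \<in> F \<longrightarrow> 1 \<in> J) \<and> separates J (F - {1})"
    and "separates (insert 0 J) F \<longleftrightarrow> (1 \<in> F \<longrightarrow> 1 \<notin> J) \<and> separates J (F - {1})"
proof -
  have ball_F: "(\<forall>k\<in>F. Q k) \<longleftrightarrow> (1 \<in> F \<longrightarrow> Q 1) \<and> (\<forall>k\<in>F - {1}. Q k)" for Q
    by blast
  have "((1 - 1 \<in> J) \<noteq> (1 \<in> J)) \<longleftrightarrow> 1 \<in> J"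
    using J by simp
  then show "separates J F \<longleftrightarrow> (1 \<in> F \<longrightarrow> 1 \<in> J) \<and> separates J (F - {1})"
    unfolding separates_def ball_F[of "\<lambda>k. (k - 1 \<in> J) \<noteq> (k \<in> J)"] by (simp only:)
  have "((1 - 1 \<in> insert 0 J) \<noteq> (1 \<in> insert 0 J)) \<longleftrightarrow> 1 \<notin> J"
    by simp
  moreover have "(\<forall>k\<in>F - {1}. (k - 1 \<in> insert 0 J) \<noteq> (k \<in> insert 0 J))
      \<longleftrightarrow> (\<forall>k\<in>F - {1}. (k - 1 \<in> J) \<noteq> (k \<in> J))"
  proof (intro ball_cong refl)
    fix k assume k: "k \<in> F - {1}"
    then have "k \<noteq> 0"
      using F by (metis DiffD1)
    moreover from k this have "k - 1 \<noteq> 0"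
      by auto
    then show "((k - 1 \<in> insert 0 J) \<noteq> (k \<in> insert 0 J)) \<longleftrightarrow> ((k - 1 \<in> J) \<noteq> (k \<in> J))"
      by simp
  qed
  ultimately show "separates (insert 0 J) F \<longleftrightarrow> (1 \<in> F \<longrightarrow> 1 \<notin> J) \<and> separates J (F - {1})"
    unfolding separates_def ball_F[of "\<lambda>k. (k - 1 \<in> insert 0 J) \<noteq> (k \<in> insert 0 J)"] by (simp only:)
qed

lemma phi_coeff_drop_0:
  assumes n: "1 \<le> n" and F: "F \<subseteq> {1..<n}"
  shows "phi_coeff n (\<lambda>J. k (J - {0})) F
    = 2 ^ (card (F - {1}) + 1) * (\<Sum>J\<in>Pow {1..<n}. if separates J (F - {1}) then k J else 0)"
proof -
  have "0 \<notin> F" and "finite F"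
    using F finite_subset by auto
  have "{0..<n} = insert 0 {1..<n}"
    using n by auto
  then have "(\<Sum>J\<in>Pow {0..<n}. if separates J F then k (J - {0}) else 0)
      = (\<Sum>J\<in>Pow {1..<n}. (if separates J F then k (J - {0}) else 0)
          + (if separates (insert 0 J) F then k (insert 0 J - {0}) else 0))"
    by (simp add: sum_Pow_insert)
  also have "\<dots> = (\<Sum>J\<in>Pow {1..<n}. (if 1 \<in> F then 1 else 2) * (if separates J (F - {1}) then k J else 0))"
  proof (intro sum.cong refl)
    fix J assume "J \<in> Pow {1..<n}"
    then have "0 \<notin> J" and e: "J - {0} = J" "insert 0 J - {0} = J"
      by auto
    show "(if separates J F then k (J - {0}) else 0)
          + (if separates (insert 0 J) F then k (insert 0 J - {0}) else 0)
        = (if 1 \<in> F then 1 else 2) * (if separates J (F - {1}) then k J else 0)"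
      unfolding e separates_insert_0[OF \<open>0 \<notin> J\<close> \<open>0 \<notin> F\<close>]
      by (cases "1 \<in> F"; cases "1 \<in> J") auto
  qed
  also have "\<dots> = (if 1 \<in> F then 1 else 2) * (\<Sum>J\<in>Pow {1..<n}. if separates J (F - {1}) then k J else 0)"
    by (simp add: sum_distrib_left)
  moreover have "2 ^ card F * (if 1 \<in> F then 1 else 2) = (2::rat) ^ (card (F - {1}) + 1)"
  proof (cases "1 \<in> F")
    case True
    then have "card F = card (F - {1}) + 1"
      using card.remove[OF \<open>finite F\<close> True] by simp
    then show ?thesis
      using True by simp
  qed simp
  ultimately show ?thesis
    unfolding phi_coeff_def by (simp add: mult.assoc[symmetric])
qed

lemma PeakAlgO_subset_phi_image_I01:
  assumes n: "1 \<le> n"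
  shows "PeakAlgO n \<subseteq> phi ` I01 n"
proof
  fix f assume "f \<in> PeakAlgO n"
  then obtain b where f: "f = peak_class n (\<lambda>F. b (F - {1}))"
    unfolding PeakAlgO_eq_range_peak_class by blast
  obtain k where k: "\<forall>F\<subseteq>{1..<n}.
      (\<Sum>J\<in>Pow {1..<n}. if separates J F then k J else 0) = b F / 2 ^ (card F + 1)"
    using ex_separating_sum_repr[of "{1..<n}" n "\<lambda>F. b F / 2 ^ (card F + 1)"] by auto
  have "phi_coeff n (\<lambda>J. k (J - {0})) F = b (F - {1})" if "F \<in> Fsets n" for F
  proof -
    have "F \<subseteq> {1..<n}"
      using that by (simp add: Fsets_def)
    moreover from this have "F - {1} \<subseteq> {1..<n}"
      by auto
    ultimately show ?thesis
      using k[rule_format, of "F - {1}"] n by (simp add: phi_coeff_drop_0)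
  qed
  then have "f = phi (des_class n (\<lambda>J. k (J - {0})))"
    unfolding f phi_des_class by (intro peak_class_cong) simp
  then show "f \<in> phi ` I01 n"
    using des_class_drop_0_in_I01[OF n] by blast
qed

section \<open>Commutation\<close>

lemma separates_insert_0_1:
  assumes "\<forall>k\<in>F. 3 \<le> k"
  shows "separates (insert 0 J) F \<longleftrightarrow> separates J F" and "separates (insert 1 J) F \<longleftrightarrow> separates J F"
proof -
  have "k - 1 \<noteq> 0 \<and> k \<noteq> 0 \<and> k - 1 \<noteq> 1 \<and> k \<noteq> 1" if "k \<in> F" for k
    using assms that by fastforce
  then show "separates (insert 0 J) F \<longleftrightarrow> separates J F" and "separates (insert 1 J) F \<longleftrightarrow> separates J F"
    unfolding separates_def by (auto intro!: ball_cong)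
qed

lemma separates_unshift2:
  assumes "0 \<notin> G"
  shows "separates (unshift2 K) (unshift2 G) \<longleftrightarrow> separates K G"
proof -
  have "(g + 2 - 1 \<in> unshift2 K) \<longleftrightarrow> (g - 1 \<in> K)" and "(g + 2 \<in> unshift2 K) \<longleftrightarrow> (g \<in> K)"
    if "g \<in> G" for g
  proof -
    have "g \<noteq> 0"
      by (rule ccontr) (use that assms in simp)
    then show "(g + 2 - 1 \<in> unshift2 K) \<longleftrightarrow> (g - 1 \<in> K)" and "(g + 2 \<in> unshift2 K) \<longleftrightarrow> (g \<in> K)"
      by (auto simp: mem_unshift2)
  qed
  then show ?thesis
    unfolding separates_def unshift2_def[of G] by auto
qed

lemma separates_insert_1: "separates J (insert 1 F) \<longleftrightarrow> ((0 \<in> J) \<noteq> (1 \<in> J)) \<and> separates J F"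
  unfolding separates_def by simp

lemma phi_coeff_beta_coeff:
  assumes n: "2 \<le> n" and G: "0 \<notin> G" "finite G"
  shows "phi_coeff n h (unshift2 G) - phi_coeff n h (insert 1 (unshift2 G)) = phi_coeff (n - 2) (beta_coeff h) G"
proof -
  have "\<forall>k\<in>unshift2 G. 3 \<le> k"
  proof
    fix k assume "k \<in> unshift2 G"
    then have "2 \<le> k" and "k - 2 \<in> G"
      by (simp_all add: mem_unshift2)
    with G(1) have "k - 2 \<noteq> 0"
      by metis
    with \<open>2 \<le> k\<close> show "3 \<le> k"
      by arith
  qed
  note s01 = separates_insert_0_1[OF this]
  have card_G: "card (unshift2 G) = card G"
    unfolding unshift2_def by (rule card_image) (simp add: inj_on_def)
  moreover have "finite (unshift2 G)"
    using G(2) by (simp add: unshift2_def)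
  ultimately have card_G1: "card (insert 1 (unshift2 G)) = card G + 1"
    by simp
  define A B C D where "A K = h (unshift2 K)" and "B K = h (insert 1 (unshift2 K))"
    and "C K = h (insert 0 (unshift2 K))" and "D K = h (insert 0 (insert 1 (unshift2 K)))" for K
  have T1: "phi_coeff n h (unshift2 G)
      = 2 ^ card G * (\<Sum>K\<in>Pow {0..<n - 2}. if separates K G then A K + B K + C K + D K else 0)"
    unfolding phi_coeff_def card_G sum_Pow_split_0_1[OF n] A_def B_def C_def D_def s01
      separates_unshift2[OF G(1)]
    by (intro arg_cong[where f="\<lambda>x. 2 ^ card G * x"] sum.cong refl) simp
  have T2: "phi_coeff n h (insert 1 (unshift2 G))
      = 2 ^ card G * (\<Sum>K\<in>Pow {0..<n - 2}. 2 * (if separates K G then B K + C K else 0))"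
    unfolding phi_coeff_def card_G1 sum_Pow_split_0_1[OF n] A_def B_def C_def D_def separates_insert_1 s01
      separates_unshift2[OF G(1)]
    by (simp add: sum_distrib_left) (intro sum.cong refl, simp)
  have "phi_coeff n h (unshift2 G) - phi_coeff n h (insert 1 (unshift2 G))
      = 2 ^ card G * (\<Sum>K\<in>Pow {0..<n - 2}. if separates K G then A K - B K - C K + D K else 0)"
    unfolding T1 T2 right_diff_distrib[symmetric] sum_subtractf[symmetric]
    by (intro arg_cong[where f="\<lambda>x. 2 ^ card G * x"] sum.cong refl) simp
  also have "\<dots> = phi_coeff (n - 2) (beta_coeff h) G"
    unfolding phi_coeff_def beta_coeff_def A_def B_def C_def D_def ..
  finally show ?thesis .
qed

lemma pimap_phi_eq_phi_beta2:
  assumes n: "2 \<le> n" and "f \<in> SigmaB n"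
  shows "pimap n (phi f) = phi (beta2 n f)"
proof -
  obtain h where f: "f = des_class n h"
    using assms(2) unfolding SigmaB_eq_range_des_class by blast
  have "pimap n (phi f)
      = peak_class (n - 2) (\<lambda>G. phi_coeff n h (unshift2 G) - phi_coeff n h (insert 1 (unshift2 G)))"
    unfolding f phi_des_class pimap_peak_class[OF n] ..
  also have "\<dots> = peak_class (n - 2) (phi_coeff (n - 2) (beta_coeff h))"
  proof (rule peak_class_cong)
    fix G assume "G \<in> Fsets (n - 2)"
    then have "0 \<notin> G" and "finite G"
      using finite_subset by (auto simp: Fsets_def)
    then show "phi_coeff n h (unshift2 G) - phi_coeff n h (insert 1 (unshift2 G))
        = phi_coeff (n - 2) (beta_coeff h) G"
      by (rule phi_coeff_beta_coeff[OF n])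
  qed
  also have "\<dots> = phi (beta2 n f)"
    unfolding f beta2_des_class[OF n] phi_des_class ..
  finally show ?thesis .
qed

lemma phi_image_I01:
  assumes n: "2 \<le> n"
  shows "phi ` I01 n = PeakAlgO n"
proof
  show "PeakAlgO n \<subseteq> phi ` I01 n"
    using n by (intro PeakAlgO_subset_phi_image_I01) simp
  show "phi ` I01 n \<subseteq> PeakAlgO n"
  proof
    fix g assume "g \<in> phi ` I01 n"
    then obtain f where "f \<in> I01 n" and g: "g = phi f"
      by blast
    then have "f \<in> SigmaB n" and "beta2 n f = (\<lambda>_. 0)"
      using I01_subset_SigmaB beta2_kernel[OF n] by blast+
    then have "g \<in> PeakAlg n" and "pimap n g = (\<lambda>_. 0)"
      unfolding g pimap_phi_eq_phi_beta2[OF n \<open>f \<in> SigmaB n\<close>]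
      using phi_image_SigmaB by (auto simp: phi_def)
    then show "g \<in> PeakAlgO n"
      using pimap_kernel[OF n] by blast
  qed
qed

theorem corollary5p10:
  fixes n :: nat
  assumes "n \<ge> 2"
  shows "I01 n \<subseteq> SigmaB n
    \<and> beta2 n ` SigmaB n = SigmaB (n - 2)
    \<and> {f \<in> SigmaB n. beta2 n f = (\<lambda>_. 0)} = I01 n
    \<and> PeakAlgO n \<subseteq> PeakAlg n
    \<and> pimap n ` PeakAlg n = PeakAlg (n - 2)
    \<and> {f \<in> PeakAlg n. pimap n f = (\<lambda>_. 0)} = PeakAlgO n
    \<and> phi ` I01 n = PeakAlgO n
    \<and> phi ` SigmaB n = PeakAlg n
    \<and> phi ` SigmaB (n - 2) = PeakAlg (n - 2)
    \<and> (\<forall>f\<in>SigmaB n. pimap n (phi f) = phi (beta2 n f))"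
proof (intro conjI ballI)
  show "I01 n \<subseteq> SigmaB n"
    by (rule I01_subset_SigmaB)
  show "beta2 n ` SigmaB n = SigmaB (n - 2)"
    using assms by (rule beta2_image)
  show "{f \<in> SigmaB n. beta2 n f = (\<lambda>_. 0)} = I01 n"
    using assms by (rule beta2_kernel)
  show "PeakAlgO n \<subseteq> PeakAlg n"
    by (rule PeakAlgO_subset_PeakAlg)
  show "pimap n ` PeakAlg n = PeakAlg (n - 2)"
    using assms by (rule pimap_image)
  show "{f \<in> PeakAlg n. pimap n f = (\<lambda>_. 0)} = PeakAlgO n"
    using assms by (rule pimap_kernel)
  show "phi ` I01 n = PeakAlgO n"
    using assms by (rule phi_image_I01)
  show "phi ` SigmaB n = PeakAlg n" and "phi ` SigmaB (n - 2) = PeakAlg (n - 2)"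
    by (rule phi_image_SigmaB)+
  show "pimap n (phi f) = phi (beta2 n f)" if "f \<in> SigmaB n" for f
    using assms that by (rule pimap_phi_eq_phi_beta2)
qed

end
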